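(* In the HBHC protocol, revocation is effective during complete network partitions: a verifier that has cached the parent's heartbeat public key $hpk_p$ decides acceptance of a child's authentication proof using only the proof, the cached $hpk_p$, a locally generated challenge, and its local clock, with no network communication; and after the parent is revoked at true time $t_r$, every such verifier rejects all proofs of the parent's children at all times $t \ge t_r + W_{\max} + \Delta_h + \epsilon$, regardless of network connectivity.
   Context: HBHC setting. A parent agent $A_p$ holds a heartbeat signing key pair $(hsk_p, hpk_p)$ (ECDSA); a child $A_c$ holds an identity key pair $(sk_c, pk_c)$ and a credential $cred_c$ containing $pk_c$, an identifier $id_c$, and $hb\_binding_c = H(hpk_p \| id_c)$ with $H$ = SHA-256. While not revoked, at time $t$ the parent emits every $\Delta_h$ seconds a heartbeat $(epoch, commitment, \sigma_h, hpk_p)$ with $epoch = \lfloor t/\Delta_h\rfloor$, $commitment = H(hpk_p\|epoch)$, $\sigma_h = \mathrm{Sign}(hsk_p, commitment)$. The child answers a verifier challenge $c$ with $(cred_c, epoch, \sigma_h, \sigma_c)$, $\sigma_c = \mathrm{Sign}(sk_c, c\|epoch\|\sigma_h)$. A verifier with cached $hpk_p$ and local time $t$ accepts iff $\lfloor t/\Delta_h\rfloor - epoch \le W_{\max}/\Delta_h$, $\sigma_h$ verifies under $hpk_p$ on $H(hpk_p\|epoch)$, $cred_c.hb\_binding = H(hpk_p\|cred_c.id)$, and $\sigma_c$ verifies under $cred_c.pk_c$ on $c\|epoch\|\sigma_h$. Revocation at $t_r$: the parent generates no heartbeats after $t_r$. Verifier clocks differ from true time by at most $\epsilon$. The adversary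 controls the network (may partition it arbitrarily and indefinitely) but cannot forge ECDSA signatures or extract $hsk_p$. The verifier is assumed to have cached $hpk_p$ before any partition occurs. *)

theory Defs
  imports Complex_Main
begin

text \<open>Byte strings are lists over an abstract alphabet 'b,
  \<open>@\<close> is concatenation (the paper's \<open>\<parallel>\<close>), H is the hash function,
  Ver is the ECDSA verification predicate, and ser_pk / ser_int / ser_sig
  serialise public keys, epochs and signatures into byte strings.\<close>

record ('pk, 'b) credential =
  cred_pk :: 'pk
  cred_id :: "'b list"
  cred_hb_binding :: "'b list"

text \<open>A child's authentication proof: (cred_c, epoch, sigma_h, sigma_c).\<close>
type_synonym ('pk, 'b, 'sig) auth_proof = "('pk, 'b) credential \<times> int \<times> 'sig \<times> 'sig"

definition epoch_of :: "real \<Rightarrow> real \<Rightarrow> int" where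
  "epoch_of dh t = \<lfloor>t / dh\<rfloor>"

definition hb_commitment ::
  "('b list \<Rightarrow> 'b list) \<Rightarrow> ('pk \<Rightarrow> 'b list) \<Rightarrow> (int \<Rightarrow> 'b list) \<Rightarrow> 'pk \<Rightarrow> int \<Rightarrow> 'b list" where
  "hb_commitment H ser_pk ser_int hpk e = H (ser_pk hpk @ ser_int e)"

text \<open>Its only inputs (besides the fixed
  public primitives and protocol parameters) are the cached heartbeat key hpk,
  the locally generated challenge c, the local clock reading tloc and the proof;
  there is no network input.\<close>
definition hbhc_accept ::
  "('pk \<Rightarrow> 'b list \<Rightarrow> 'sig \<Rightarrow> bool) \<Rightarrow> ('b list \<Rightarrow> 'b list) \<Rightarrow> ('pk \<Rightarrow> 'b list) \<Rightarrow>
   (int \<Rightarrow> 'b list) \<Rightarrow> ('sig \<Rightarrow> 'b list) \<Rightarrow> real \<Rightarrow> real \<Rightarrow>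
   'pk \<Rightarrow> 'b list \<Rightarrow> real \<Rightarrow> ('pk, 'b, 'sig) auth_proof \<Rightarrow> bool" where
  "hbhc_accept Ver H ser_pk ser_int ser_sig dh Wmax hpk c tloc prf =
     (case prf of (cr, e, sh, sc) \<Rightarrow>
        real_of_int (epoch_of dh tloc - e) \<le> Wmax / dh
      \<and> Ver hpk (hb_commitment H ser_pk ser_int hpk e) sh
      \<and> cred_hb_binding cr = H (ser_pk hpk @ cred_id cr)
      \<and> Ver (cred_pk cr) (c @ ser_int e @ ser_sig sh) sc)"

text \<open>Messages the parent ever signed with hsk_p, given revocation at t_r:
  commitments of the epochs of emission times t' \<le> t_r.\<close>
definition parent_signed ::
  "('b list \<Rightarrow> 'b list) \<Rightarrow> ('pk \<Rightarrow> 'b list) \<Rightarrow> (int \<Rightarrow> 'b list) \<Rightarrow> real \<Rightarrow> 'pk \<Rightarrow> real \<Rightarrow> 'b list set" where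
  "parent_signed H ser_pk ser_int dh hpk tr =
     {hb_commitment H ser_pk ser_int hpk (epoch_of dh t') | t'. t' \<le> tr}"

end

theory Submission
  imports Defs
begin

text \<open>An accepted proof contains a heartbeat signature valid under the cached key
  \<open>hpk\<close>. By unforgeability it signs a commitment the parent issued, and since
  commitments are injective in the epoch, the proof's epoch is that of some emission
  time \<open>t' \<le> tr\<close>. The verifier's clock reads at least \<open>tr + Wmax + dh\<close>, and
  flooring loses less than one epoch, so the proof is more than \<open>Wmax / dh\<close> epochs
  old and fails the freshness test.\<close>

lemma epoch_of_diff_gt: "(t - s) / dh - 1 < real_of_int (epoch_of dh t - epoch_of dh s)"
  unfolding epoch_of_def diff_divide_distrib by linarith

lemma signed_commitment_epoch:
  assumes "inj (hb_commitment H ser_pk ser_int hpk)"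
    and "hb_commitment H ser_pk ser_int hpk e \<in> parent_signed H ser_pk ser_int dh hpk tr"
  obtains t' where "t' \<le> tr" and "e = epoch_of dh t'"
  using assms that unfolding parent_signed_def by (auto dest: injD)

theorem theorem2:
  fixes Ver :: "'pk \<Rightarrow> 'b list \<Rightarrow> 'sig \<Rightarrow> bool"
    and H :: "'b list \<Rightarrow> 'b list"
    and ser_pk :: "'pk \<Rightarrow> 'b list"
    and ser_int :: "int \<Rightarrow> 'b list"
    and ser_sig :: "'sig \<Rightarrow> 'b list"
    and hpk :: 'pk
    and dh Wmax eps tr :: real
  assumes dh_pos: "dh > 0"
    and Wmax_nonneg: "Wmax \<ge> 0"
    and eps_nonneg: "eps \<ge> 0"
    and unforgeable: "\<And>m \<sigma>. Ver hpk m \<sigma> \<Longrightarrow> m \<in> parent_signed H ser_pk ser_int dh hpk tr"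
    and collision_resistant: "inj (hb_commitment H ser_pk ser_int hpk)"
  shows "\<forall>t tloc c prf. t \<ge> tr + Wmax + dh + eps \<longrightarrow> \<bar>tloc - t\<bar> \<le> eps \<longrightarrow>
           \<not> hbhc_accept Ver H ser_pk ser_int ser_sig dh Wmax hpk c tloc prf"
proof (intro allI impI notI)
  fix t tloc c pf
  assume late: "t \<ge> tr + Wmax + dh + eps" and clock: "\<bar>tloc - t\<bar> \<le> eps"
    and accepted: "hbhc_accept Ver H ser_pk ser_int ser_sig dh Wmax hpk c tloc pf"
  obtain cr e sh sc where pf: "pf = (cr, e, sh, sc)" by (cases pf) auto
  have fresh: "real_of_int (epoch_of dh tloc - e) \<le> Wmax / dh"
    and heartbeat: "Ver hpk (hb_commitment H ser_pk ser_int hpk e) sh"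
    using accepted unfolding hbhc_accept_def pf by auto
  obtain t' where "t' \<le> tr" and e: "e = epoch_of dh t'"
    using signed_commitment_epoch[OF collision_resistant unforgeable[OF heartbeat]] .
  then have "Wmax + dh \<le> tloc - t'" using late clock by linarith
  then have "(Wmax + dh) / dh \<le> (tloc - t') / dh"
    using dh_pos by (simp add: divide_right_mono)
  then have "Wmax / dh \<le> (tloc - t') / dh - 1"
    using dh_pos by (simp add: add_divide_distrib)
  with fresh epoch_of_diff_gt[of tloc t' dh] show False
    unfolding e by linarith
qed

end
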